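(* If $f$ has the saddle property, then the set $$\mathcal Q_{f\text{-DPI}}=\{Q \text{ pmf on }\mathcal Z:\ Q_S=P_S,\ \textstyle\sum_{s,\hat s}Q(s,x,y,\hat s)=P_{Y|X}(y|x)Q_X(x)\ \forall x,y,\ I_f(Q_{S,\widehat S})\le I_f(Q_{X,Y})\}$$ is convex.
   Context: $\mathcal S,\mathcal X,\mathcal Y,\widehat{\mathcal S}$ are finite nonempty sets, $\mathcal Z=\mathcal S\times\mathcal X\times\mathcal Y\times\widehat{\mathcal S}$, $P_S$ is a fixed pmf on $\mathcal S$ and $P_{Y|X}$ a fixed channel from $\mathcal X$ to $\mathcal Y$. For a pmf $Q$ on $\mathcal Z$, $Q_S,Q_X$ denote marginals and $Q_{S,\widehat S},Q_{X,Y}$ the pairwise marginals. For $f:(0,\infty)\to\mathbb R$ convex, let $f'(\infty)=\lim_{t\to\infty}f(t)/t\in(-\infty,+\infty]$; for a joint pmf $p(u,v)$ on a finite product set with marginals $p(u),p(v)$, $I_f(p)=\sum_{u,v}\phi(u,v)\in(-\infty,+\infty]$ where $\phi(u,v)=p(u,v)f(p(u)p(v)/p(u,v))$ if $p(u,v)>0$, $\phi(u,v)=p(u)p(v)f'(\infty)$ if $p(u,v)=0<p(u)p(v)$, and $\phi(u,v)=0$ if $p(u)p(v)=0$. A function $f$ has the saddle property if $f:(0,\infty)\to\mathbb R$ is convex and, for all finite sets $\mathcal U,\mathcal V$ and every kernel $p(v|u)$, the map $p_U\mapsto I_f\big(p_U(u)p(v|u)\big)$ is concave on the set of pmfs on $\mathcal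 U$. *)

theory Defs
  imports "HOL-Analysis.Analysis"
begin

definition fprime_inf :: "(real \<Rightarrow> real) \<Rightarrow> ereal" where
  "fprime_inf f = Lim at_top (\<lambda>t. ereal (f t / t))"

definition If_term :: "(real \<Rightarrow> real) \<Rightarrow> real \<Rightarrow> real \<Rightarrow> real \<Rightarrow> ereal" where
  "If_term f puv pu pv =
     (if puv > 0 then ereal (puv * f (pu * pv / puv))
      else if puv = 0 \<and> 0 < pu * pv then ereal (pu * pv) * fprime_inf f
      else 0)"

definition I_f :: "(real \<Rightarrow> real) \<Rightarrow> 'u set \<Rightarrow> 'v set \<Rightarrow> ('u \<Rightarrow> 'v \<Rightarrow> real) \<Rightarrow> ereal" where
  "I_f f U V p = (\<Sum>u\<in>U. \<Sum>v\<in>V.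
      If_term f (p u v) (\<Sum>v'\<in>V. p u v') (\<Sum>u'\<in>U. p u' v))"

definition is_pmf_on :: "'a set \<Rightarrow> ('a \<Rightarrow> real) \<Rightarrow> bool" where
  "is_pmf_on A p \<longleftrightarrow> (\<forall>a\<in>A. 0 \<le> p a) \<and> (\<Sum>a\<in>A. p a) = 1"

definition is_kernel_on :: "'a set \<Rightarrow> 'b set \<Rightarrow> ('a \<Rightarrow> 'b \<Rightarrow> real) \<Rightarrow> bool" where
  "is_kernel_on A B K \<longleftrightarrow> (\<forall>a\<in>A. is_pmf_on B (K a))"

text \<open>Arbitrary finite sets U, V are represented as finite sets of naturals
  (every finite set is in bijection with one). Concavity of an extended-real valued map on the
  simplex of pmfs on U is written out explicitly.\<close>
definition saddle_property :: "(real \<Rightarrow> real) \<Rightarrow> bool" where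
  "saddle_property f \<longleftrightarrow>
     convex_on {0<..} f \<and>
     (\<forall>(U::nat set) (V::nat set) K. finite U \<and> finite V \<and> is_kernel_on U V K \<longrightarrow>
        (\<forall>p1 p2 t. is_pmf_on U p1 \<and> is_pmf_on U p2 \<and> 0 \<le> t \<and> t \<le> 1 \<longrightarrow>
           ereal t * I_f f U V (\<lambda>u v. p1 u * K u v)
             + ereal (1 - t) * I_f f U V (\<lambda>u v. p2 u * K u v)
           \<le> I_f f U V (\<lambda>u v. (t * p1 u + (1 - t) * p2 u) * K u v)))"

definition Q_fDPI :: "(real \<Rightarrow> real) \<Rightarrow> ('s::finite \<Rightarrow> real) \<Rightarrow> ('x::finite \<Rightarrow> 'y::finite \<Rightarrow> real)
    \<Rightarrow> ('s \<times> 'x \<times> 'y \<times> 'h::finite \<Rightarrow> real) set" where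
  "Q_fDPI f PS W = {Q.
      is_pmf_on UNIV Q \<and>
      (\<forall>s. (\<Sum>x\<in>UNIV. \<Sum>y\<in>UNIV. \<Sum>h\<in>UNIV. Q (s, x, y, h)) = PS s) \<and>
      (\<forall>x y. (\<Sum>s\<in>UNIV. \<Sum>h\<in>UNIV. Q (s, x, y, h))
              = W x y * (\<Sum>s\<in>UNIV. \<Sum>y'\<in>UNIV. \<Sum>h\<in>UNIV. Q (s, x, y', h))) \<and>
      I_f f UNIV UNIV (\<lambda>s h. \<Sum>x\<in>UNIV. \<Sum>y\<in>UNIV. Q (s, x, y, h))
        \<le> I_f f UNIV UNIV (\<lambda>x y. \<Sum>s\<in>UNIV. \<Sum>h\<in>UNIV. Q (s, x, y, h))}"

end

theory Submission
  imports Defs "HOL-Real_Asymp.Real_Asymp"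
begin

text \<open>The constraints fixing Q_S and the channel are linear in Q, so only the f-information
  inequality needs an argument. Along a segment of the set, Q_S = P_S stays fixed, and with fixed
  row sums each summand of I_f(Q_{S,S^}) is a perspective of the convex function f, so
  I_f(Q_{S,S^}) is convex along the segment. The channel is fixed as well, so Q_{X,Y} = Q_X P_{Y|X}
  and the saddle property makes I_f(Q_{X,Y}) concave along it. A convex function lying below a
  concave one at both endpoints stays below it in between.\<close>

lemma fprime_inf_eq_SUP_slope:
  fixes f :: "real \<Rightarrow> real"
  assumes cv: "convex_on {0<..} f" and s: "0 < s"
  shows "fprime_inf f = (SUP T\<in>{s<..}. ereal ((f T - f s) / (T - s)))"
proof -
  define g where "g T = (f T - f s) / (T - s)" for T
  define L where "L = (SUP T\<in>{s<..}. ereal (g T))"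
  have g_mono: "g a \<le> g b" if "s < a" "a \<le> b" for a b
  proof (cases "a = b")
    case False
    then show ?thesis
      using convex_on_slope_le[OF cv, of s b a] that s unfolding g_def
      by (simp add: divide_simps) (auto simp: algebra_simps)
  qed simp
  have g_le_L: "ereal (g T) \<le> L" if "s < T" for T
    unfolding L_def using that by (intro SUP_upper) auto
  have lim_g: "((\<lambda>T. ereal (g T)) \<longlongrightarrow> L) at_top"
  proof (rule order_tendstoI)
    fix a assume "a < L"
    then obtain T0 where T0: "s < T0" "a < ereal (g T0)"
      unfolding L_def less_SUP_iff by auto
    show "\<forall>\<^sub>F T in at_top. a < ereal (g T)"
      using eventually_ge_at_top[of T0]
      by eventually_elim (use T0 g_mono in \<open>force intro: less_le_trans\<close>)
  next
    fix a assume "L < a"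
    show "\<forall>\<^sub>F T in at_top. ereal (g T) < a"
      using eventually_gt_at_top[of s]
      by eventually_elim (use g_le_L \<open>L < a\<close> in \<open>force intro: le_less_trans\<close>)
  qed
  have "((\<lambda>T. ereal ((T - s) / T)) \<longlongrightarrow> ereal 1) at_top"
    unfolding lim_ereal by real_asymp
  moreover have "((\<lambda>T. ereal (f s / T)) \<longlongrightarrow> ereal 0) at_top"
    unfolding lim_ereal by real_asymp
  ultimately have "((\<lambda>T. ereal (g T) * ereal ((T - s) / T) + ereal (f s / T)) \<longlongrightarrow> L * ereal 1 + ereal 0) at_top"
    using lim_g by (intro tendsto_add_ereal_general tendsto_mult_ereal) auto
  then have "((\<lambda>T. ereal (g T) * ereal ((T - s) / T) + ereal (f s / T)) \<longlongrightarrow> L) at_top"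
    by simp
  moreover have "\<forall>\<^sub>F T in at_top. ereal (g T) * ereal ((T - s) / T) + ereal (f s / T) = ereal (f T / T)"
    using eventually_gt_at_top[of s]
    by eventually_elim (use s in \<open>simp add: g_def field_simps\<close>)
  ultimately have "((\<lambda>T. ereal (f T / T)) \<longlongrightarrow> L) at_top"
    using Lim_transform_eventually by fastforce
  then show ?thesis
    unfolding fprime_inf_def L_def g_def by (intro tendsto_Lim) auto
qed

lemma slope_le_fprime_inf:
  assumes "convex_on {0<..} f" and "0 < s" and "s < T"
  shows "ereal ((f T - f s) / (T - s)) \<le> fprime_inf f"
  unfolding fprime_inf_eq_SUP_slope[OF assms(1,2)] using assms(3) by (intro SUP_upper) auto

lemma fprime_inf_neq_MInf:
  assumes "convex_on {0<..} f"
  shows "fprime_inf f \<noteq> -\<infinity>"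
  using slope_le_fprime_inf[OF assms, of 1 2] by auto

text \<open>\<open>If_term f x y 1\<close> is the perspective \<open>x f(y/x)\<close> of \<open>f\<close>, extended to \<open>x = 0\<close> by
  \<open>y f'(\<infinity>)\<close>; every summand of \<open>I_f\<close> is of this form.\<close>

lemma If_term_eq_If_term_1: "If_term f a b c = If_term f a (b * c) 1"
  by (simp add: If_term_def)

lemma perspective_convex_pos:
  fixes f :: "real \<Rightarrow> real"
  assumes cv: "convex_on {0<..} f" and x: "0 < x1" "0 < x2" and y: "0 < y1" "0 < y2"
    and t: "0 \<le> t" "t \<le> 1"
  shows "(t*x1 + (1-t)*x2) * f ((t*y1 + (1-t)*y2) / (t*x1 + (1-t)*x2))
         \<le> t * (x1 * f (y1/x1)) + (1-t) * (x2 * f (y2/x2))"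
proof -
  define x where "x = t*x1 + (1-t)*x2"
  have x_pos: "x > 0" unfolding x_def using x t
    by (cases "t = 0") (auto intro: add_pos_nonneg add_nonneg_pos)
  define \<mu> where "\<mu> = t*x1/x"
  have \<mu>: "0 \<le> \<mu>" "\<mu> \<le> 1" unfolding \<mu>_def using x_pos x t by (auto simp: divide_simps x_def)
  have one_minus_\<mu>: "1 - \<mu> = (1-t)*x2/x" unfolding \<mu>_def using x_pos by (simp add: divide_simps x_def)
  have "(t*y1 + (1-t)*y2) / x = \<mu> * (y1/x1) + (1 - \<mu>) * (y2/x2)"
    unfolding one_minus_\<mu> unfolding \<mu>_def using x x_pos by (simp add: divide_simps)
  moreover have "f (\<mu> * (y1/x1) + (1 - \<mu>) * (y2/x2)) \<le> \<mu> * f (y1/x1) + (1 - \<mu>) * f (y2/x2)"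
    using convex_onD[OF cv, of "1-\<mu>" "y1/x1" "y2/x2"] \<mu> x y by simp
  ultimately have "x * f ((t*y1 + (1-t)*y2) / x) \<le> x * (\<mu> * f (y1/x1) + (1 - \<mu>) * f (y2/x2))"
    using x_pos by (simp add: mult_left_mono)
  also have "\<dots> = (x*\<mu>) * f (y1/x1) + (x*(1-\<mu>)) * f (y2/x2)"
    by (simp add: algebra_simps)
  also have "x*\<mu> = t*x1" unfolding \<mu>_def using x_pos by simp
  also have "x*(1-\<mu>) = (1-t)*x2" unfolding one_minus_\<mu> using x_pos by simp
  finally show ?thesis unfolding x_def by (simp add: mult.assoc)
qed

text \<open>At the boundary \<open>x1 = 0\<close> the slope bound \<open>f T - f s \<le> (T - s) f'(\<infinity>)\<close> replaces convexity.\<close>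

lemma perspective_convex_boundary:
  fixes f :: "real \<Rightarrow> real"
  assumes cv: "convex_on {0<..} f" and x2: "0 < x2" and y: "0 \<le> y1" "0 < y2"
    and t: "0 < t" "t < 1"
  shows "If_term f ((1-t)*x2) (t*y1 + (1-t)*y2) 1
         \<le> ereal t * If_term f 0 y1 1 + ereal (1-t) * If_term f x2 y2 1"
proof -
  define a where "a = (1-t)*x2"
  have a: "a > 0" unfolding a_def using x2 t by simp
  consider "y1 = 0" | "y1 > 0" "fprime_inf f = \<infinity>" | r where "y1 > 0" "fprime_inf f = ereal r"
    using y fprime_inf_neq_MInf[OF cv] by (cases "fprime_inf f") fastforce+
  then show ?thesis
  proof cases
    case 1
    have "((1-t)*y2) / ((1-t)*x2) = y2/x2" using t by simp
    then show ?thesis using 1 a x2 t by (simp add: If_term_def a_def)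
  next
    case 2
    then show ?thesis using a t by (simp add: If_term_def a_def)
  next
    case 3
    define s where "s = y2/x2"
    define T where "T = (t*y1 + (1-t)*y2) / a"
    have T_eq: "T = s + t*y1/a" unfolding T_def s_def a_def using a x2 t by (simp add: field_simps)
    have "s < T" unfolding T_eq using 3 t a by simp
    moreover have "0 < s" unfolding s_def using x2 y by simp
    ultimately have "(f T - f s) / (T - s) \<le> r"
      using slope_le_fprime_inf[OF cv] 3 by fastforce
    then have "f T \<le> f s + (T - s) * r"
      using \<open>s < T\<close> by (simp add: divide_simps mult.commute)
    then have "a * f T \<le> a * f s + (a * (T - s)) * r"
      using a by (simp add: mult_left_mono distrib_left[symmetric] mult.assoc)
    also have "a * (T - s) = t * y1" unfolding T_eq using a by simp
    also have "a * f s = (1-t) * (x2 * f (y2/x2))" unfolding a_def s_def by simp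
    finally show ?thesis
      using 3 a x2 unfolding T_def by (simp add: If_term_def a_def algebra_simps)
  qed
qed

lemma perspective_convex:
  fixes f :: "real \<Rightarrow> real"
  assumes cv: "convex_on {0<..} f"
    and nn: "0 \<le> x1" "0 \<le> x2" "0 \<le> y1" "0 \<le> y2"
    and pos: "0 < x1 \<Longrightarrow> 0 < y1" "0 < x2 \<Longrightarrow> 0 < y2"
    and t: "0 \<le> t" "t \<le> 1"
  shows "If_term f (t*x1 + (1-t)*x2) (t*y1 + (1-t)*y2) 1
         \<le> ereal t * If_term f x1 y1 1 + ereal (1-t) * If_term f x2 y2 1"
proof -
  consider "t = 0" | "t = 1" | "0 < t" "t < 1" using t by linarith
  then show ?thesis
  proof cases
    case 3
    consider "0 < x1" "0 < x2" | "x1 = 0" "0 < x2" | "0 < x1" "x2 = 0" | "x1 = 0" "x2 = 0"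
      using nn by linarith
    then show ?thesis
    proof cases
      case 1
      have "t*x1 + (1-t)*x2 > 0" using 1 3 by (simp add: add_pos_pos)
      then show ?thesis
        using perspective_convex_pos[OF cv 1 pos(1)[OF 1(1)] pos(2)[OF 1(2)], of t] 1 t
        by (simp add: If_term_def)
    next
      case 2
      then show ?thesis using perspective_convex_boundary[OF cv 2(2) nn(3) pos(2)[OF 2(2)] 3] by simp
    next
      case 4
      have "y2 \<noteq> 0 \<Longrightarrow> t * y2 < y2 + t * y1"
        using 3 nn mult_strict_right_mono[of t 1 y2] by (smt (verit) mult_nonneg_nonneg)
      then show ?thesis
        using 3 4 nn fprime_inf_neq_MInf[OF cv]
        by (cases "fprime_inf f"; cases "y1 = 0"; cases "y2 = 0")
           (auto simp: If_term_def algebra_simps add_pos_nonneg add_nonneg_pos)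
    next
      case x2: 3
      have "If_term f (t*x1 + (1-t)*x2) (t*y1 + (1-t)*y2) 1
         = If_term f ((1 - (1-t))*x1) ((1-t)*y2 + (1 - (1-t))*y1) 1"
        using x2 by (simp add: algebra_simps)
      also have "\<dots> \<le> ereal (1-t) * If_term f 0 y2 1 + ereal (1 - (1-t)) * If_term f x1 y1 1"
        using perspective_convex_boundary[OF cv x2(1) nn(4) pos(1)[OF x2(1)], of "1-t"] 3 by simp
      finally show ?thesis using x2 by (simp add: add.commute)
    qed
  qed (simp_all add: zero_ereal_def[symmetric])
qed

lemma sum_convex_comb:
  fixes t :: real
  shows "(\<Sum>a\<in>A. t * p a + (1-t) * q a) = t * sum p A + (1-t) * sum q A"
  by (simp add: sum.distrib sum_distrib_left)

lemma is_pmf_on_convex_comb: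
  assumes "is_pmf_on A p" "is_pmf_on A q" "0 \<le> t" "t \<le> 1"
  shows "is_pmf_on A (\<lambda>a. t * p a + (1-t) * q a)"
  using assms unfolding is_pmf_on_def by (simp add: sum_convex_comb)

lemma I_f_convex_fixed_row_sums:
  fixes f :: "real \<Rightarrow> real"
  assumes cv: "convex_on {0<..} f" and fin: "finite U" "finite V"
    and nn1: "\<And>u v. 0 \<le> p1 u v" and nn2: "\<And>u v. 0 \<le> p2 u v"
    and row: "\<And>u. (\<Sum>v\<in>V. p1 u v) = (\<Sum>v\<in>V. p2 u v)"
    and t: "0 \<le> t" "t \<le> 1"
  shows "I_f f U V (\<lambda>u v. t * p1 u v + (1-t) * p2 u v)
      \<le> ereal t * I_f f U V p1 + ereal (1-t) * I_f f U V p2"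
proof -
  define r where "r u = (\<Sum>v\<in>V. p1 u v)" for u
  define c1 where "c1 v = (\<Sum>u\<in>U. p1 u v)" for v
  define c2 where "c2 v = (\<Sum>u\<in>U. p2 u v)" for v
  have row_mix: "(\<Sum>v\<in>V. t * p1 u v + (1-t) * p2 u v) = r u * (t + (1-t))" for u
    unfolding sum_convex_comb r_def row by (simp add: algebra_simps)
  have col_mix: "(\<Sum>u\<in>U. t * p1 u v + (1-t) * p2 u v) = t * c1 v + (1-t) * c2 v" for v
    unfolding sum_convex_comb c1_def c2_def ..
  have term_le: "If_term f (t * p1 u v + (1-t) * p2 u v) (r u) (t * c1 v + (1-t) * c2 v)
     \<le> ereal t * If_term f (p1 u v) (r u) (c1 v) + ereal (1-t) * If_term f (p2 u v) (r u) (c2 v)"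
    if "u \<in> U" "v \<in> V" for u v
  proof -
    have "p1 u v \<le> r u" "p1 u v \<le> c1 v" "p2 u v \<le> c2 v"
      unfolding r_def c1_def c2_def using fin that nn1 nn2 by (auto intro: member_le_sum)
    moreover have "p2 u v \<le> r u"
      unfolding r_def row using fin that nn2 by (auto intro: member_le_sum)
    ultimately have "If_term f (t * p1 u v + (1-t) * p2 u v) (t * (r u * c1 v) + (1-t) * (r u * c2 v)) 1
        \<le> ereal t * If_term f (p1 u v) (r u * c1 v) 1 + ereal (1-t) * If_term f (p2 u v) (r u * c2 v) 1"
      using nn1[of u v] nn2[of u v] t by (intro perspective_convex[OF cv]) auto
    then show ?thesis by (simp add: If_term_eq_If_term_1[of f _ "r u"] algebra_simps)
  qed
  have "I_f f U V (\<lambda>u v. t * p1 u v + (1-t) * p2 u v)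
     = (\<Sum>u\<in>U. \<Sum>v\<in>V. If_term f (t * p1 u v + (1-t) * p2 u v) (r u) (t * c1 v + (1-t) * c2 v))"
    unfolding I_f_def row_mix col_mix by simp
  also have "\<dots> \<le> (\<Sum>u\<in>U. \<Sum>v\<in>V. ereal t * If_term f (p1 u v) (r u) (c1 v)
      + ereal (1-t) * If_term f (p2 u v) (r u) (c2 v))"
    by (intro sum_mono term_le)
  also have "\<dots> = ereal t * I_f f U V p1 + ereal (1-t) * I_f f U V p2"
    unfolding I_f_def r_def[symmetric] c1_def[symmetric] c2_def[symmetric] row[symmetric]
    using t by (simp add: sum.distrib sum_distrib_right_ereal mult.commute[of "ereal _"])
  finally show ?thesis .
qed

lemma I_f_reindex_bij:
  assumes hx: "bij_betw hx U' U" and hy: "bij_betw hy V' V"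
  shows "I_f f U' V' (\<lambda>u v. p (hx u) (hy v)) = I_f f U V p"
proof -
  have "I_f f U' V' (\<lambda>u v. p (hx u) (hy v)) =
     (\<Sum>u\<in>U'. \<Sum>v\<in>V'. If_term f (p (hx u) (hy v)) (\<Sum>v'\<in>V. p (hx u) v') (\<Sum>u'\<in>U. p u' (hy v)))"
    unfolding I_f_def sum.reindex_bij_betw[OF hy] sum.reindex_bij_betw[OF hx, of "\<lambda>u'. p u' (hy _)"] ..
  also have "\<dots> = (\<Sum>u\<in>U'. \<Sum>v\<in>V. If_term f (p (hx u) v) (\<Sum>v'\<in>V. p (hx u) v') (\<Sum>u'\<in>U. p u' v))"
    by (rule sum.cong[OF refl], rule sum.reindex_bij_betw[OF hy])
  also have "\<dots> = I_f f U V p"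
    unfolding I_f_def by (rule sum.reindex_bij_betw[OF hx])
  finally show ?thesis .
qed

lemma is_pmf_on_reindex_bij:
  assumes "bij_betw h A B" "is_pmf_on B q"
  shows "is_pmf_on A (\<lambda>a. q (h a))"
  using assms sum.reindex_bij_betw[OF assms(1), of q] unfolding is_pmf_on_def bij_betw_def by auto

lemma saddle_property_finite_types:
  fixes W :: "'x::finite \<Rightarrow> 'y::finite \<Rightarrow> real"
  assumes sp: "saddle_property f" and W: "is_kernel_on UNIV UNIV W"
    and p1: "is_pmf_on UNIV p1" and p2: "is_pmf_on UNIV p2" and t: "0 \<le> t" "t \<le> 1"
  shows "ereal t * I_f f UNIV UNIV (\<lambda>x y. p1 x * W x y)
        + ereal (1 - t) * I_f f UNIV UNIV (\<lambda>x y. p2 x * W x y)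
      \<le> I_f f UNIV UNIV (\<lambda>x y. (t * p1 x + (1 - t) * p2 x) * W x y)"
proof -
  define U where "U = {0..<card (UNIV::'x set)}"
  define V where "V = {0..<card (UNIV::'y set)}"
  obtain hx :: "nat \<Rightarrow> 'x" where hx: "bij_betw hx U UNIV"
    using ex_bij_betw_nat_finite[of "UNIV::'x set"] unfolding U_def by auto
  obtain hy :: "nat \<Rightarrow> 'y" where hy: "bij_betw hy V UNIV"
    using ex_bij_betw_nat_finite[of "UNIV::'y set"] unfolding V_def by auto
  have "is_kernel_on U V (\<lambda>u v. W (hx u) (hy v))"
    using W hy unfolding is_kernel_on_def by (auto intro: is_pmf_on_reindex_bij)
  moreover have "is_pmf_on U (\<lambda>u. p1 (hx u))" "is_pmf_on U (\<lambda>u. p2 (hx u))"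
    using hx p1 p2 by (auto intro: is_pmf_on_reindex_bij)
  ultimately have "ereal t * I_f f U V (\<lambda>u v. p1 (hx u) * W (hx u) (hy v))
      + ereal (1 - t) * I_f f U V (\<lambda>u v. p2 (hx u) * W (hx u) (hy v))
      \<le> I_f f U V (\<lambda>u v. (t * p1 (hx u) + (1 - t) * p2 (hx u)) * W (hx u) (hy v))"
    using sp t unfolding saddle_property_def U_def V_def by auto
  then show ?thesis
    unfolding I_f_reindex_bij[OF hx hy, symmetric] .
qed

text \<open>Marginals of a pmf on S \<times> X \<times> Y \<times> S^; the last coordinate h ranges over S^.\<close>

definition marg_S :: "('s \<times> 'x::finite \<times> 'y::finite \<times> 'h::finite \<Rightarrow> real) \<Rightarrow> 's \<Rightarrow> real" where
  "marg_S Q s = (\<Sum>x\<in>UNIV. \<Sum>y\<in>UNIV. \<Sum>h\<in>UNIV. Q (s, x, y, h))"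

definition marg_X :: "('s::finite \<times> 'x \<times> 'y::finite \<times> 'h::finite \<Rightarrow> real) \<Rightarrow> 'x \<Rightarrow> real" where
  "marg_X Q x = (\<Sum>s\<in>UNIV. \<Sum>y\<in>UNIV. \<Sum>h\<in>UNIV. Q (s, x, y, h))"

definition marg_SH :: "('s \<times> 'x::finite \<times> 'y::finite \<times> 'h \<Rightarrow> real) \<Rightarrow> 's \<Rightarrow> 'h \<Rightarrow> real" where
  "marg_SH Q s h = (\<Sum>x\<in>UNIV. \<Sum>y\<in>UNIV. Q (s, x, y, h))"

definition marg_XY :: "('s::finite \<times> 'x \<times> 'y \<times> 'h::finite \<Rightarrow> real) \<Rightarrow> 'x \<Rightarrow> 'y \<Rightarrow> real" where
  "marg_XY Q x y = (\<Sum>s\<in>UNIV. \<Sum>h\<in>UNIV. Q (s, x, y, h))"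

lemma Q_fDPI_iff:
  "Q \<in> Q_fDPI f PS W \<longleftrightarrow>
     is_pmf_on UNIV Q \<and> marg_S Q = PS \<and> marg_XY Q = (\<lambda>x y. marg_X Q x * W x y) \<and>
     I_f f UNIV UNIV (marg_SH Q) \<le> I_f f UNIV UNIV (marg_XY Q)"
  unfolding Q_fDPI_def marg_S_def[abs_def] marg_X_def[abs_def] marg_SH_def[abs_def]
    marg_XY_def[abs_def]
  by (auto simp: fun_eq_iff mult.commute)

lemma marg_convex_comb:
  fixes t :: real and Q1 Q2 :: "'s::finite \<times> 'x::finite \<times> 'y::finite \<times> 'h::finite \<Rightarrow> real"
  defines "Q \<equiv> \<lambda>z. t * Q1 z + (1-t) * Q2 z"
  shows "marg_S Q = (\<lambda>s. t * marg_S Q1 s + (1-t) * marg_S Q2 s)"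
    and "marg_X Q = (\<lambda>x. t * marg_X Q1 x + (1-t) * marg_X Q2 x)"
    and "marg_SH Q = (\<lambda>s h. t * marg_SH Q1 s h + (1-t) * marg_SH Q2 s h)"
    and "marg_XY Q = (\<lambda>x y. t * marg_XY Q1 x y + (1-t) * marg_XY Q2 x y)"
  unfolding Q_def marg_S_def marg_X_def marg_SH_def marg_XY_def by (simp_all add: sum_convex_comb)

lemma sum_marg_SH: "(\<Sum>h\<in>UNIV. marg_SH Q s h) = marg_S Q s"
proof -
  have "(\<Sum>h\<in>UNIV. marg_SH Q s h) = (\<Sum>x\<in>UNIV. \<Sum>h\<in>UNIV. \<Sum>y\<in>UNIV. Q (s, x, y, h))"
    unfolding marg_SH_def by (rule sum.swap)
  also have "\<dots> = marg_S Q s"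
    unfolding marg_S_def by (intro sum.cong refl sum.swap)
  finally show ?thesis .
qed

lemma sum_UNIV_prod4:
  "sum Q (UNIV :: ('s::finite \<times> 'x::finite \<times> 'y::finite \<times> 'h::finite) set)
     = (\<Sum>s\<in>UNIV. \<Sum>x\<in>UNIV. \<Sum>y\<in>UNIV. \<Sum>h\<in>UNIV. Q (s, x, y, h))"
  by (simp add: sum.cartesian_product UNIV_Times_UNIV[symmetric] del: UNIV_Times_UNIV)

lemma is_pmf_on_marg_X:
  fixes Q :: "'s::finite \<times> 'x::finite \<times> 'y::finite \<times> 'h::finite \<Rightarrow> real"
  assumes "is_pmf_on UNIV Q"
  shows "is_pmf_on UNIV (marg_X Q)"
proof -
  have "(\<Sum>x\<in>UNIV. marg_X Q x) = sum Q UNIV"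
    unfolding marg_X_def sum_UNIV_prod4 by (rule sum.swap)
  then show ?thesis
    using assms unfolding is_pmf_on_def marg_X_def by (auto intro!: sum_nonneg)
qed

lemma marg_SH_nonneg:
  assumes "is_pmf_on UNIV Q"
  shows "0 \<le> marg_SH Q s h"
  using assms unfolding is_pmf_on_def marg_SH_def by (auto intro!: sum_nonneg)

lemma I_f_marg_SH_le_marg_XY_convex_comb:
  assumes sp: "saddle_property f" and W: "is_kernel_on UNIV UNIV W"
    and Q1: "Q1 \<in> Q_fDPI f PS W" and Q2: "Q2 \<in> Q_fDPI f PS W" and t: "0 \<le> t" "t \<le> 1"
  defines "Q \<equiv> \<lambda>z. t * Q1 z + (1 - t) * Q2 z"
  shows "I_f f UNIV UNIV (marg_SH Q) \<le> I_f f UNIV UNIV (marg_XY Q)"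
proof -
  have cv: "convex_on {0<..} f" using sp unfolding saddle_property_def by auto
  have XY1: "marg_XY Q1 = (\<lambda>x y. marg_X Q1 x * W x y)" and XY2: "marg_XY Q2 = (\<lambda>x y. marg_X Q2 x * W x y)"
    using Q1 Q2 by (simp_all add: Q_fDPI_iff)
  have "I_f f UNIV UNIV (marg_SH Q)
      \<le> ereal t * I_f f UNIV UNIV (marg_SH Q1) + ereal (1-t) * I_f f UNIV UNIV (marg_SH Q2)"
    unfolding Q_def marg_convex_comb
    using Q1 Q2 t by (intro I_f_convex_fixed_row_sums[OF cv]) (auto simp: Q_fDPI_iff sum_marg_SH marg_SH_nonneg)
  also have "\<dots> \<le> ereal t * I_f f UNIV UNIV (marg_XY Q1) + ereal (1-t) * I_f f UNIV UNIV (marg_XY Q2)"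
    using Q1 Q2 t by (intro add_mono ereal_mult_left_mono) (auto simp: Q_fDPI_iff)
  also have "\<dots> \<le> I_f f UNIV UNIV (\<lambda>x y. (t * marg_X Q1 x + (1-t) * marg_X Q2 x) * W x y)"
    unfolding XY1 XY2 using Q1 Q2 t
    by (intro saddle_property_finite_types[OF sp W] is_pmf_on_marg_X) (auto simp: Q_fDPI_iff)
  also have "\<dots> = I_f f UNIV UNIV (marg_XY Q)"
    unfolding Q_def marg_convex_comb XY1 XY2 by (simp add: algebra_simps)
  finally show ?thesis .
qed

theorem lemma4p4:
  fixes f :: "real \<Rightarrow> real"
    and PS :: "'s::finite \<Rightarrow> real"
    and W :: "'x::finite \<Rightarrow> 'y::finite \<Rightarrow> real"
  assumes "is_pmf_on UNIV PS"
    and "is_kernel_on UNIV UNIV W"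
    and "saddle_property f"
  shows "\<forall>Q1\<in>(Q_fDPI f PS W :: ('s \<times> 'x \<times> 'y \<times> 'h::finite \<Rightarrow> real) set).
           \<forall>Q2\<in>Q_fDPI f PS W. \<forall>t::real. 0 \<le> t \<and> t \<le> 1 \<longrightarrow>
             (\<lambda>z. t * Q1 z + (1 - t) * Q2 z) \<in> Q_fDPI f PS W"
proof (intro ballI allI impI)
  fix Q1 Q2 :: "'s \<times> 'x \<times> 'y \<times> 'h \<Rightarrow> real" and t :: real
  assume Q1: "Q1 \<in> Q_fDPI f PS W" and Q2: "Q2 \<in> Q_fDPI f PS W" and t: "0 \<le> t \<and> t \<le> 1"
  have "is_pmf_on UNIV (\<lambda>z. t * Q1 z + (1 - t) * Q2 z)"
    using Q1 Q2 t by (intro is_pmf_on_convex_comb) (auto simp: Q_fDPI_iff)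
  moreover have "marg_S (\<lambda>z. t * Q1 z + (1 - t) * Q2 z) = PS"
    using Q1 Q2 unfolding marg_convex_comb by (auto simp: Q_fDPI_iff algebra_simps)
  moreover have "marg_XY (\<lambda>z. t * Q1 z + (1 - t) * Q2 z)
      = (\<lambda>x y. marg_X (\<lambda>z. t * Q1 z + (1 - t) * Q2 z) x * W x y)"
    using Q1 Q2 unfolding marg_convex_comb by (auto simp: Q_fDPI_iff algebra_simps)
  moreover note I_f_marg_SH_le_marg_XY_convex_comb[OF assms(3,2) Q1 Q2] t
  ultimately show "(\<lambda>z. t * Q1 z + (1 - t) * Q2 z) \<in> Q_fDPI f PS W"
    unfolding Q_fDPI_iff by blast
qed

end
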